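(* Let $q$ be a prime power and $u\in\mathbb F_{q^3}\setminus\mathbb F_q$. Then the $\mathbb F_q$-subspace $$U=\{(\alpha_0+\alpha_1u,\ \alpha_2+\alpha_3u,\ \alpha_4+\alpha_5u,\ \alpha_6+\alpha_7u) : \alpha_i\in\mathbb F_q\}\subseteq\mathbb F_{q^3}^4$$ is a cutting $[8,4]_{q^3/q}$ system.
   Context: An $[n,k]_{q^m/q}$ system is an $\mathbb F_q$-subspace $U$ of $\mathbb F_{q^m}^k$ with $\dim_{\mathbb F_q}(U)=n$ and $\langle U\rangle_{\mathbb F_{q^m}}=\mathbb F_{q^m}^k$. It is cutting if for every $\mathbb F_{q^m}$-hyperplane $H$ of $\mathbb F_{q^m}^k$ one has $\langle H\cap U\rangle_{\mathbb F_{q^m}}=H$. *)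

theory Defs
  imports Main "HOL-Computational_Algebra.Primes"
begin

definition is_subfield :: "'a::field set \<Rightarrow> bool" where
  "is_subfield K \<longleftrightarrow> 0 \<in> K \<and> 1 \<in> K \<and>
     (\<forall>x\<in>K. \<forall>y\<in>K. x + y \<in> K \<and> x * y \<in> K) \<and>
     (\<forall>x\<in>K. - x \<in> K) \<and> (\<forall>x\<in>K. x \<noteq> 0 \<longrightarrow> inverse x \<in> K)"

text \<open>Vectors of length k over 'a, encoded as functions nat => 'a vanishing from index k on.\<close>
definition vecs :: "nat \<Rightarrow> (nat \<Rightarrow> 'a::field) set" where
  "vecs k = {v. \<forall>i\<ge>k. v i = 0}"

definition span_over :: "'a::field set \<Rightarrow> (nat \<Rightarrow> 'a) set \<Rightarrow> (nat \<Rightarrow> 'a) set" where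
  "span_over S A = {v. \<exists>B c. finite B \<and> B \<subseteq> A \<and> (\<forall>b\<in>B. c b \<in> S) \<and>
                          v = (\<lambda>i. \<Sum>b\<in>B. c b * b i)}"

definition indep_over :: "'a::field set \<Rightarrow> (nat \<Rightarrow> 'a) set \<Rightarrow> bool" where
  "indep_over S A \<longleftrightarrow> (\<forall>B c. finite B \<and> B \<subseteq> A \<and> (\<forall>b\<in>B. c b \<in> S) \<and>
                          (\<lambda>i. \<Sum>b\<in>B. c b * b i) = (\<lambda>i. 0) \<longrightarrow> (\<forall>b\<in>B. c b = 0))"

definition subspace_over :: "'a::field set \<Rightarrow> nat \<Rightarrow> (nat \<Rightarrow> 'a) set \<Rightarrow> bool" where
  "subspace_over S k U \<longleftrightarrow> U \<subseteq> vecs k \<and> (\<lambda>i. 0) \<in> U \<and>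
     (\<forall>x\<in>U. \<forall>y\<in>U. (\<lambda>i. x i + y i) \<in> U) \<and> (\<forall>c\<in>S. \<forall>x\<in>U. (\<lambda>i. c * x i) \<in> U)"

definition dim_over :: "'a::field set \<Rightarrow> (nat \<Rightarrow> 'a) set \<Rightarrow> nat \<Rightarrow> bool" where
  "dim_over S U n \<longleftrightarrow> (\<exists>B. finite B \<and> B \<subseteq> U \<and> card B = n \<and> indep_over S B \<and> span_over S B = U)"

definition hyperplane :: "nat \<Rightarrow> (nat \<Rightarrow> 'a::field) \<Rightarrow> (nat \<Rightarrow> 'a) set" where
  "hyperplane k a = {v \<in> vecs k. (\<Sum>i<k. a i * v i) = 0}"

text \<open>An [n,k]_{q^m/q} system: K plays the role of F_q inside the big field 'a.\<close>
definition is_system :: "'a::field set \<Rightarrow> nat \<Rightarrow> nat \<Rightarrow> (nat \<Rightarrow> 'a) set \<Rightarrow> bool" where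
  "is_system K n k U \<longleftrightarrow> subspace_over K k U \<and> dim_over K U n \<and> span_over UNIV U = vecs k"

definition is_cutting_system :: "'a::field set \<Rightarrow> nat \<Rightarrow> nat \<Rightarrow> (nat \<Rightarrow> 'a) set \<Rightarrow> bool" where
  "is_cutting_system K n k U \<longleftrightarrow> is_system K n k U \<and>
     (\<forall>a\<in>vecs k. a \<noteq> (\<lambda>i. 0) \<longrightarrow> span_over UNIV (hyperplane k a \<inter> U) = hyperplane k a)"

end

theory Submission
  imports Defs "HOL-Library.FuncSet"
begin

(* Write W = F_q + F_q u, a 2-dimensional F_q-subspace of F_{q^3}; then U = W^4 has
   F_q-dimension 4 * 2. Since |W|^2 = q^4 > q^3, the map (x, y) \<mapsto> x + c y on W \<times> W is not
   injective, so for every c some w \<noteq> 0 in W has c w \<in> W. Given a hyperplane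
   a_0 x_0 + ... + a_3 x_3 = 0 with a_l \<noteq> 0, this yields for each j \<noteq> l a vector of H \<inter> U
   supported on {j, l} with nonzero j-th entry, and these three vectors span H. *)

lemma is_subfield_UNIV: "is_subfield UNIV"
  by (simp add: is_subfield_def)

lemma subfield_diff:
  assumes "is_subfield S" "x \<in> S" "y \<in> S"
  shows "x - y \<in> S"
  using assms by (metis diff_conv_add_uminus is_subfield_def)

lemma subfield_sum:
  assumes "is_subfield S" "\<forall>x\<in>A. f x \<in> S"
  shows "sum f A \<in> S"
  using assms(2)
proof (induction A rule: infinite_finite_induct)
  case (insert x A)
  then show ?case using assms(1) by (simp add: is_subfield_def)
qed (use assms(1) in \<open>simp_all add: is_subfield_def\<close>)

lemma span_over_subset:
  assumes V: "subspace_over S k V" and "A \<subseteq> V"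
  shows "span_over S A \<subseteq> V"
proof
  fix v assume "v \<in> span_over S A"
  then obtain B c where B: "finite B" "B \<subseteq> A" "\<forall>b\<in>B. c b \<in> S"
    and v: "v = (\<lambda>i. \<Sum>b\<in>B. c b * b i)"
    unfolding span_over_def by blast
  have "(\<lambda>i. \<Sum>b\<in>B. c b * b i) \<in> V" using B
  proof (induction B rule: finite_induct)
    case (insert x F)
    then have "(\<lambda>i. c x * x i) \<in> V" "(\<lambda>i. \<Sum>b\<in>F. c b * b i) \<in> V"
      using V \<open>A \<subseteq> V\<close> by (auto simp: subspace_over_def)
    then show ?case using V insert by (simp add: subspace_over_def)
  qed (use V in \<open>simp add: subspace_over_def\<close>)
  then show "v \<in> V" using v by simp
qed

lemma lincomb_in_span_over:
  assumes S: "is_subfield S" and "finite I" and c: "\<forall>i\<in>I. c i \<in> S" and "g ` I \<subseteq> A"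
  shows "(\<lambda>j. \<Sum>i\<in>I. c i * g i j) \<in> span_over S A"
proof -
  define d where "d b = (\<Sum>i | i \<in> I \<and> g i = b. c i)" for b
  have "(\<Sum>i\<in>I. c i * g i j) = (\<Sum>b\<in>g ` I. d b * b j)" for j
  proof -
    have "(\<Sum>i\<in>I. c i * g i j) = (\<Sum>b\<in>g ` I. \<Sum>i | i \<in> I \<and> g i = b. c i * g i j)"
      by (rule sum.image_gen[OF \<open>finite I\<close>])
    also have "\<dots> = (\<Sum>b\<in>g ` I. d b * b j)"
      unfolding d_def sum_distrib_right by (intro sum.cong refl) auto
    finally show ?thesis .
  qed
  moreover have "\<forall>b\<in>g ` I. d b \<in> S"
    unfolding d_def using S c by (auto intro: subfield_sum)
  ultimately show ?thesis
    using \<open>finite I\<close> \<open>g ` I \<subseteq> A\<close> unfolding span_over_def by blast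
qed

lemma sum_over_subset_of_image:
  fixes f :: "'i \<Rightarrow> nat \<Rightarrow> 'a::field"
  assumes "finite I" "inj_on f I" "B \<subseteq> f ` I"
  shows "(\<Sum>b\<in>B. c b * b j) = (\<Sum>i\<in>I. (if f i \<in> B then c (f i) else 0) * f i j)"
proof -
  define N where "N = {i \<in> I. f i \<in> B}"
  have "B = f ` N" using assms(3) unfolding N_def by auto
  then have "(\<Sum>b\<in>B. c b * b j) = (\<Sum>i\<in>N. c (f i) * f i j)"
    using sum.reindex[of f N] inj_on_subset[OF assms(2)] unfolding N_def by fastforce
  also have "\<dots> = (\<Sum>i\<in>I. (if f i \<in> B then c (f i) else 0) * f i j)"
    unfolding N_def using assms(1) by (auto simp: sum.inter_filter intro!: sum.cong)
  finally show ?thesis .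
qed

lemma inj_on_indep_family:
  fixes f :: "'i \<Rightarrow> nat \<Rightarrow> 'a::field"
  assumes S: "is_subfield S" and I: "finite I"
    and indep: "\<And>c. \<forall>i\<in>I. c i \<in> S \<Longrightarrow> (\<lambda>j. \<Sum>i\<in>I. c i * f i j) = (\<lambda>j. 0) \<Longrightarrow> \<forall>i\<in>I. c i = 0"
  shows "inj_on f I"
proof (rule inj_onI, rule ccontr)
  fix i i' assume i: "i \<in> I" "i' \<in> I" "f i = f i'" "i \<noteq> i'"
  define c where "c x = (if x = i then (1::'a) else if x = i' then - 1 else 0)" for x :: 'i
  have "(\<Sum>x\<in>I. c x * f x j) = (\<Sum>x\<in>{i, i'}. c x * f x j)" for j
    using I i by (intro sum.mono_neutral_right) (auto simp: c_def)
  then have "(\<lambda>j. \<Sum>x\<in>I. c x * f x j) = (\<lambda>j. 0)"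
    using i by (auto simp: c_def)
  moreover have "\<forall>x\<in>I. c x \<in> S" using S by (simp add: c_def is_subfield_def)
  ultimately have "c i = 0" using indep i(1) by blast
  then show False by (simp add: c_def)
qed

lemma dim_over_indexed_basis:
  fixes f :: "'i \<Rightarrow> nat \<Rightarrow> 'a::field"
  assumes S: "is_subfield S" and I: "finite I"
    and indep: "\<And>c. \<forall>i\<in>I. c i \<in> S \<Longrightarrow> (\<lambda>j. \<Sum>i\<in>I. c i * f i j) = (\<lambda>j. 0) \<Longrightarrow> \<forall>i\<in>I. c i = 0"
    and U: "U = {(\<lambda>j. \<Sum>i\<in>I. c i * f i j) | c. \<forall>i\<in>I. c i \<in> S}"
  shows "dim_over S U (card I)"
proof -
  have S01: "0 \<in> S" "1 \<in> S" using S by (auto simp: is_subfield_def)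
  have inj: "inj_on f I"
    using S I indep by (rule inj_on_indep_family)
  let ?coeff = "\<lambda>B c i. if f i \<in> B then c (f i) else 0"
  have span: "span_over S (f ` I) = U"
  proof
    show "span_over S (f ` I) \<subseteq> U"
    proof
      fix v assume "v \<in> span_over S (f ` I)"
      then obtain B c where B: "B \<subseteq> f ` I" "\<forall>b\<in>B. c b \<in> S" and v: "v = (\<lambda>j. \<Sum>b\<in>B. c b * b j)"
        unfolding span_over_def by blast
      have "v = (\<lambda>j. \<Sum>i\<in>I. ?coeff B c i * f i j)"
        unfolding v using sum_over_subset_of_image[OF I inj B(1)] by simp
      moreover have "\<forall>i\<in>I. ?coeff B c i \<in> S" using B(2) S01 by simp
      ultimately show "v \<in> U" unfolding U by (intro CollectI exI[of _ "?coeff B c"] conjI)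
    qed
    show "U \<subseteq> span_over S (f ` I)"
      unfolding U using lincomb_in_span_over[OF S I, of _ f] by auto
  qed
  have "indep_over S (f ` I)"
    unfolding indep_over_def
  proof (intro allI impI ballI)
    fix B c b assume Bc: "finite B \<and> B \<subseteq> f ` I \<and> (\<forall>b\<in>B. c b \<in> S) \<and> (\<lambda>j. \<Sum>b\<in>B. c b * b j) = (\<lambda>j. 0)"
      and "b \<in> B"
    then obtain i where i: "i \<in> I" "b = f i" by blast
    have "\<forall>i\<in>I. ?coeff B c i \<in> S" using Bc S01 by simp
    moreover have "(\<lambda>j. \<Sum>i\<in>I. ?coeff B c i * f i j) = (\<lambda>j. 0)"
      using Bc sum_over_subset_of_image[OF I inj, of B c] by (metis (no_types, lifting))
    ultimately have "\<forall>i\<in>I. ?coeff B c i = 0" by (rule indep)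
    then have "?coeff B c i = 0" using i(1) by blast
    then show "c b = 0" using i \<open>b \<in> B\<close> by simp
  qed
  moreover have "f ` I \<subseteq> U"
  proof
    fix b assume "b \<in> f ` I"
    then have "b \<in> span_over S (f ` I)"
      using lincomb_in_span_over[OF S, of "{b}" "\<lambda>_. 1" id "f ` I"] S01 by simp
    then show "b \<in> U" using span by simp
  qed
  ultimately show ?thesis
    unfolding dim_over_def using I span card_image[OF inj] by blast
qed

definition lincombs :: "'a::field set \<Rightarrow> nat \<Rightarrow> (nat \<Rightarrow> 'a) \<Rightarrow> 'a set" where
  "lincombs K m b = {\<Sum>t<m. c t * b t | c. \<forall>t<m. c t \<in> K}"

definition lin_indep_over :: "'a::field set \<Rightarrow> nat \<Rightarrow> (nat \<Rightarrow> 'a) \<Rightarrow> bool" where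
  "lin_indep_over K m b \<longleftrightarrow> (\<forall>c. (\<forall>t<m. c t \<in> K) \<longrightarrow> (\<Sum>t<m. c t * b t) = 0 \<longrightarrow> (\<forall>t<m. c t = 0))"

definition vecs_in :: "nat \<Rightarrow> 'a::field set \<Rightarrow> (nat \<Rightarrow> 'a) set" where
  "vecs_in k W = {v \<in> vecs k. \<forall>i<k. v i \<in> W}"

definition unit_vec :: "nat \<Rightarrow> 'a::field \<Rightarrow> nat \<Rightarrow> 'a" where
  "unit_vec i w = (\<lambda>j. if j = i then w else 0)"

lemma lincombsI:
  assumes "\<forall>t<m. c t \<in> K"
  shows "(\<Sum>t<m. c t * b t) \<in> lincombs K m b"
  using assms unfolding lincombs_def by blast

lemma lincombsE:
  assumes "x \<in> lincombs K m b"
  obtains c where "\<forall>t<m. c t \<in> K" "x = (\<Sum>t<m. c t * b t)"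
  using assms unfolding lincombs_def by blast

lemma lincombs_diff:
  assumes "is_subfield K" "x \<in> lincombs K m b" "y \<in> lincombs K m b"
  shows "x - y \<in> lincombs K m b"
proof -
  obtain c where "\<forall>t<m. c t \<in> K" "x = (\<Sum>t<m. c t * b t)"
    using assms(2) by (rule lincombsE)
  moreover obtain c' where "\<forall>t<m. c' t \<in> K" "y = (\<Sum>t<m. c' t * b t)"
    using assms(3) by (rule lincombsE)
  ultimately have "x - y = (\<Sum>t<m. (c t - c' t) * b t)" "\<forall>t<m. c t - c' t \<in> K"
    using subfield_diff[OF assms(1)] by (auto simp: sum_subtractf left_diff_distrib)
  then show ?thesis by (simp add: lincombsI)
qed

lemma subspace_over_vecs_in_lincombs:
  assumes K: "is_subfield K"
  shows "subspace_over K k (vecs_in k (lincombs K m b))"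
proof -
  let ?W = "lincombs K m b"
  have "0 \<in> ?W"
    using K lincombsI[of m "\<lambda>_. 0" K b] by (simp add: is_subfield_def)
  moreover have "x + y \<in> ?W" if "x \<in> ?W" "y \<in> ?W" for x y
    using lincombs_diff[OF K that(1) lincombs_diff[OF K calculation that(2)]] by simp
  moreover have "a * x \<in> ?W" if a: "a \<in> K" and x: "x \<in> ?W" for a x
  proof -
    obtain c where "\<forall>t<m. c t \<in> K" "x = (\<Sum>t<m. c t * b t)"
      using x by (rule lincombsE)
    then have "a * x = (\<Sum>t<m. (a * c t) * b t)" "\<forall>t<m. a * c t \<in> K"
      using K a by (auto simp: sum_distrib_left mult.assoc is_subfield_def)
    then show ?thesis by (simp add: lincombsI)
  qed
  ultimately show ?thesis
    unfolding subspace_over_def vecs_in_def vecs_def by auto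
qed

lemma card_lincombs:
  assumes K: "is_subfield K" "finite K" and indep: "lin_indep_over K m b"
  shows "card (lincombs K m b) = card K ^ m"
proof -
  let ?comb = "\<lambda>c. \<Sum>t<m. c t * b t"
  have "lincombs K m b = ?comb ` ({..<m} \<rightarrow>\<^sub>E K)"
  proof
    show "lincombs K m b \<subseteq> ?comb ` ({..<m} \<rightarrow>\<^sub>E K)"
    proof
      fix x assume "x \<in> lincombs K m b"
      then obtain c where c: "\<forall>t<m. c t \<in> K" "x = ?comb c" by (rule lincombsE)
      then have "x = ?comb (restrict c {..<m})" by simp
      moreover have "restrict c {..<m} \<in> {..<m} \<rightarrow>\<^sub>E K" using c(1) by simp
      ultimately show "x \<in> ?comb ` ({..<m} \<rightarrow>\<^sub>E K)" by blast
    qed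
    show "?comb ` ({..<m} \<rightarrow>\<^sub>E K) \<subseteq> lincombs K m b"
      by (auto intro!: lincombsI)
  qed
  moreover have "inj_on ?comb ({..<m} \<rightarrow>\<^sub>E K)"
  proof (rule inj_onI)
    fix c c' assume c: "c \<in> {..<m} \<rightarrow>\<^sub>E K" "c' \<in> {..<m} \<rightarrow>\<^sub>E K" and eq: "?comb c = ?comb c'"
    have "(\<Sum>t<m. (c t - c' t) * b t) = 0"
      using eq by (simp add: sum_subtractf left_diff_distrib)
    moreover have "\<forall>t<m. c t - c' t \<in> K" using c subfield_diff[OF K(1)] by auto
    ultimately have "\<forall>t<m. c t = c' t" using indep unfolding lin_indep_over_def by auto
    then show "c = c'" using c by (auto intro: PiE_ext)
  qed
  ultimately show ?thesis
    by (simp add: card_image card_PiE)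
qed

lemma sum_unit_vec:
  fixes c :: "nat \<Rightarrow> 'a::field"
  assumes "finite I"
  shows "(\<Sum>i\<in>I. c i * unit_vec i (w i) j) = (if j \<in> I then c j * w j else 0)"
proof -
  have "(\<Sum>i\<in>I. c i * unit_vec i (w i) j) = (\<Sum>i\<in>I. if j = i then c i * w i else 0)"
    by (intro sum.cong) (auto simp: unit_vec_def)
  then show ?thesis using assms by simp
qed

lemma sum_unit_vecs:
  fixes c :: "nat \<times> nat \<Rightarrow> 'a::field"
  shows "(\<Sum>p\<in>{..<k} \<times> {..<m}. c p * unit_vec (fst p) (b (snd p)) j)
     = (if j < k then \<Sum>t<m. c (j, t) * b t else 0)"
proof -
  have "(\<Sum>p\<in>{..<k} \<times> {..<m}. c p * unit_vec (fst p) (b (snd p)) j)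
      = (\<Sum>i<k. \<Sum>t<m. c (i, t) * unit_vec i (b t) j)"
    by (simp add: sum.cartesian_product case_prod_unfold)
  also have "\<dots> = (\<Sum>i<k. if j = i then \<Sum>t<m. c (i, t) * b t else 0)"
    by (intro sum.cong) (auto simp: unit_vec_def)
  finally show ?thesis by simp
qed

lemma dim_over_vecs_in_lincombs:
  assumes K: "is_subfield K" and indep: "lin_indep_over K m b"
  shows "dim_over K (vecs_in k (lincombs K m b)) (k * m)"
proof -
  let ?I = "{..<k} \<times> {..<m}"
  let ?f = "\<lambda>p. unit_vec (fst p) (b (snd p))"
  have "dim_over K (vecs_in k (lincombs K m b)) (card ?I)"
  proof (rule dim_over_indexed_basis[OF K, of ?I ?f])
    fix c assume c: "\<forall>p\<in>?I. c p \<in> K" and "(\<lambda>j. \<Sum>p\<in>?I. c p * ?f p j) = (\<lambda>j. 0)"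
    then have "(\<Sum>t<m. c (j, t) * b t) = 0" if "j < k" for j
      using that sum_unit_vecs[where c = c and j = j] by (metis (no_types, lifting))
    then show "\<forall>p\<in>?I. c p = 0"
      using c indep unfolding lin_indep_over_def by fastforce
  next
    show "vecs_in k (lincombs K m b) = {(\<lambda>j. \<Sum>p\<in>?I. c p * ?f p j) | c. \<forall>p\<in>?I. c p \<in> K}"
    proof
      show "vecs_in k (lincombs K m b) \<subseteq> {(\<lambda>j. \<Sum>p\<in>?I. c p * ?f p j) | c. \<forall>p\<in>?I. c p \<in> K}"
      proof
        fix v assume v: "v \<in> vecs_in k (lincombs K m b)"
        have "\<forall>j<k. \<exists>C. (\<forall>t<m. C t \<in> K) \<and> v j = (\<Sum>t<m. C t * b t)"
          using v unfolding vecs_in_def lincombs_def by blast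
        then obtain C where C: "\<forall>j<k. (\<forall>t<m. C j t \<in> K) \<and> v j = (\<Sum>t<m. C j t * b t)"
          by metis
        have "v = (\<lambda>j. \<Sum>p\<in>?I. C (fst p) (snd p) * ?f p j)"
        proof
          fix j show "v j = (\<Sum>p\<in>?I. C (fst p) (snd p) * ?f p j)"
            using sum_unit_vecs[where c = "\<lambda>p. C (fst p) (snd p)" and j = j] v C
            by (auto simp: vecs_in_def vecs_def)
        qed
        moreover have "\<forall>p\<in>?I. C (fst p) (snd p) \<in> K" using C by auto
        ultimately show "v \<in> {(\<lambda>j. \<Sum>p\<in>?I. c p * ?f p j) | c. \<forall>p\<in>?I. c p \<in> K}"
          by (intro CollectI exI[of _ "\<lambda>p. C (fst p) (snd p)"] conjI)
      qed
      show "{(\<lambda>j. \<Sum>p\<in>?I. c p * ?f p j) | c. \<forall>p\<in>?I. c p \<in> K} \<subseteq> vecs_in k (lincombs K m b)"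
        by (auto simp: sum_unit_vecs vecs_in_def vecs_def intro!: lincombsI)
    qed
  qed simp
  then show ?thesis by simp
qed

lemma span_vecs_in:
  fixes W :: "'a::field set"
  assumes "0 \<in> W" "w \<in> W" "w \<noteq> 0"
  shows "span_over UNIV (vecs_in k W) = vecs k"
proof
  show "span_over UNIV (vecs_in k W) \<subseteq> vecs k"
    by (rule span_over_subset[of _ k]) (auto simp: subspace_over_def vecs_in_def vecs_def)
  show "vecs k \<subseteq> span_over UNIV (vecs_in k W)"
  proof
    fix v :: "nat \<Rightarrow> 'a" assume v: "v \<in> vecs k"
    have "v = (\<lambda>j. \<Sum>i<k. (v i / w) * unit_vec i w j)"
    proof
      fix j
      show "v j = (\<Sum>i<k. (v i / w) * unit_vec i w j)"
        using sum_unit_vec[where I = "{..<k}" and c = "\<lambda>i. v i / w" and w = "\<lambda>_. w" and j = j]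
          v assms(3) by (simp add: vecs_def)
    qed
    also have "\<dots> \<in> span_over UNIV (vecs_in k W)"
      by (rule lincomb_in_span_over[OF is_subfield_UNIV])
        (use assms(1,2) in \<open>auto simp: vecs_in_def vecs_def unit_vec_def\<close>)
    finally show "v \<in> span_over UNIV (vecs_in k W)" .
  qed
qed

lemma subspace_over_hyperplane: "subspace_over S k (hyperplane k a)"
proof -
  have "(\<Sum>i<k. a i * (c * x i)) = c * (\<Sum>i<k. a i * x i)" for c x
    by (simp add: sum_distrib_left algebra_simps)
  then show ?thesis
    unfolding subspace_over_def hyperplane_def vecs_def
    by (auto simp: distrib_left sum.distrib)
qed

definition hyperplane_pair_vec :: "(nat \<Rightarrow> 'a::field) \<Rightarrow> nat \<Rightarrow> nat \<Rightarrow> 'a \<Rightarrow> nat \<Rightarrow> 'a" where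
  "hyperplane_pair_vec a l j x = (\<lambda>i. if i = j then x else if i = l then - (a j / a l) * x else 0)"

lemma hyperplane_pair_vec_in_hyperplane:
  assumes "j < k" "l < k" "j \<noteq> l" "a l \<noteq> 0"
  shows "hyperplane_pair_vec a l j x \<in> hyperplane k a"
proof -
  have "(\<Sum>i<k. a i * hyperplane_pair_vec a l j x i) = (\<Sum>i\<in>{j, l}. a i * hyperplane_pair_vec a l j x i)"
    using assms by (intro sum.mono_neutral_right) (auto simp: hyperplane_pair_vec_def)
  also have "\<dots> = 0" using assms by (simp add: hyperplane_pair_vec_def)
  finally show ?thesis
    unfolding hyperplane_def vecs_def using assms by (auto simp: hyperplane_pair_vec_def)
qed

lemma hyperplane_eq_sum_pair_vecs:
  fixes a h w :: "nat \<Rightarrow> 'a::field"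
  assumes h: "h \<in> hyperplane k a" and l: "l < k" "a l \<noteq> 0"
    and w: "\<forall>j\<in>{..<k} - {l}. w j \<noteq> 0"
  shows "h = (\<lambda>i. \<Sum>j\<in>{..<k} - {l}. (h j / w j) * hyperplane_pair_vec a l j (w j) i)"
proof
  fix i
  let ?J = "{..<k} - {l}"
  consider "i \<in> ?J" | "i = l" | "i \<ge> k"
    using l by fastforce
  then show "h i = (\<Sum>j\<in>?J. (h j / w j) * hyperplane_pair_vec a l j (w j) i)"
  proof cases
    case 1
    then have "(\<Sum>j\<in>?J. (h j / w j) * hyperplane_pair_vec a l j (w j) i) = (\<Sum>j\<in>?J. if j = i then h i else 0)"
      using w by (intro sum.cong) (auto simp: hyperplane_pair_vec_def)
    then show ?thesis using 1 by simp
  next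
    case 2
    have "(\<Sum>j\<in>?J. (h j / w j) * hyperplane_pair_vec a l j (w j) i) = - (\<Sum>j\<in>?J. a j * h j) / a l"
      using w 2 by (auto simp: hyperplane_pair_vec_def sum_divide_distrib sum_negf intro!: sum.cong)
    also have "(\<Sum>j\<in>?J. a j * h j) = - (a l * h l)"
      using h l sum.remove[of "{..<k}" l "\<lambda>i. a i * h i"]
      unfolding hyperplane_def by (simp add: eq_neg_iff_add_eq_0 add.commute)
    finally show ?thesis using 2 l by simp
  next
    case 3
    then show ?thesis using h l(1) unfolding hyperplane_pair_vec_def hyperplane_def vecs_def by auto
  qed
qed

lemma span_hyperplane_inter_vecs_in:
  fixes W :: "'a::field set"
  assumes mult: "\<And>c. \<exists>w\<in>W. w \<noteq> 0 \<and> c * w \<in> W"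
    and a: "a \<in> vecs k" "a \<noteq> (\<lambda>i. 0)"
  shows "span_over UNIV (hyperplane k a \<inter> vecs_in k W) = hyperplane k a"
proof
  show "span_over UNIV (hyperplane k a \<inter> vecs_in k W) \<subseteq> hyperplane k a"
    by (rule span_over_subset[OF subspace_over_hyperplane]) auto
  show "hyperplane k a \<subseteq> span_over UNIV (hyperplane k a \<inter> vecs_in k W)"
  proof
    fix h assume h: "h \<in> hyperplane k a"
    obtain l where l: "l < k" "a l \<noteq> 0"
      using a unfolding vecs_def by (metis (mono_tags) mem_Collect_eq not_le)
    have "0 \<in> W" using mult[of 0] by auto
    let ?J = "{..<k} - {l}"
    have "\<forall>j\<in>?J. \<exists>x\<in>W. x \<noteq> 0 \<and> - (a j / a l) * x \<in> W"
      using mult by blast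
    then obtain w where w: "\<forall>j\<in>?J. w j \<in> W \<and> w j \<noteq> 0 \<and> - (a j / a l) * w j \<in> W"
      by metis
    have "hyperplane_pair_vec a l j (w j) \<in> hyperplane k a \<inter> vecs_in k W" if "j \<in> ?J" for j
      using that w hyperplane_pair_vec_in_hyperplane[of j k l a "w j"] l \<open>0 \<in> W\<close>
      unfolding hyperplane_pair_vec_def vecs_in_def hyperplane_def by auto
    then have "(\<lambda>i. \<Sum>j\<in>?J. (h j / w j) * hyperplane_pair_vec a l j (w j) i)
        \<in> span_over UNIV (hyperplane k a \<inter> vecs_in k W)"
      by (intro lincomb_in_span_over[OF is_subfield_UNIV]) auto
    then show "h \<in> span_over UNIV (hyperplane k a \<inter> vecs_in k W)"
      using hyperplane_eq_sum_pair_vecs[OF h l] w by simp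
  qed
qed

lemma exists_nonzero_multiple_in:
  fixes W :: "'a::{field,finite} set"
  assumes diff: "\<forall>x\<in>W. \<forall>y\<in>W. x - y \<in> W" and big: "card (UNIV :: 'a set) < card W * card W"
  shows "\<exists>w\<in>W. w \<noteq> 0 \<and> c * w \<in> W"
proof -
  have "\<not> inj_on (\<lambda>(x, y). x + c * y) (W \<times> W)"
  proof
    assume "inj_on (\<lambda>(x, y). x + c * y) (W \<times> W)"
    then have "card (W \<times> W) \<le> card (UNIV :: 'a set)"
      by (metis card_image card_mono finite subset_UNIV)
    then show False using big by (simp add: card_cartesian_product)
  qed
  then obtain x y x' y' where xy: "x \<in> W" "y \<in> W" "x' \<in> W" "y' \<in> W"
    and ne: "(x, y) \<noteq> (x', y')" and eq: "x + c * y = x' + c * y'"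
    unfolding inj_on_def by auto
  have "y \<noteq> y'" using ne eq by auto
  moreover have "c * (y - y') = x' - x" using eq by (simp add: algebra_simps)
  ultimately show ?thesis using xy diff by (intro bexI[of _ "y - y'"]) auto
qed

lemma lin_indep_over_1_u:
  assumes K: "is_subfield K" and u: "u \<notin> K"
  shows "lin_indep_over K 2 (\<lambda>t. u ^ t)"
  unfolding lin_indep_over_def
proof (rule allI, intro impI)
  fix c assume c: "\<forall>t<2. c t \<in> K" and "(\<Sum>t<2. c t * u ^ t) = 0"
  then have eq: "c 0 + c 1 * u = 0" by (simp add: numeral_2_eq_2)
  have "c 1 = 0"
  proof (rule ccontr)
    assume "c 1 \<noteq> 0"
    then have "u = - c 0 * inverse (c 1)"
      using eq by (simp add: field_simps eq_neg_iff_add_eq_0 add.commute)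
    moreover have "c 0 \<in> K" "c 1 \<in> K" using c by auto
    ultimately have "u \<in> K"
      using K \<open>c 1 \<noteq> 0\<close> unfolding is_subfield_def by metis
    then show False using u by simp
  qed
  then show "\<forall>t<2. c t = 0" using eq by (auto simp: less_2_cases_iff)
qed

lemma interleaved_coords_eq_vecs_in_lincombs:
  "{v. \<exists>\<alpha>. (\<forall>j<k * m. \<alpha> j \<in> K) \<and> v = (\<lambda>i. if i < k then \<Sum>t<m. \<alpha> (m * i + t) * b t else 0)}
     = vecs_in k (lincombs K m b)"
proof
  have index_bound: "m * i + t < k * m" if "i < k" "t < m" for i t
  proof -
    have "m * i + t < m * (i + 1)" using that by simp
    also have "\<dots> \<le> m * k" using that by (intro mult_le_mono2) simp
    finally show ?thesis by (simp add: mult.commute)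
  qed
  show "{v. \<exists>\<alpha>. (\<forall>j<k * m. \<alpha> j \<in> K) \<and> v = (\<lambda>i. if i < k then \<Sum>t<m. \<alpha> (m * i + t) * b t else 0)}
     \<subseteq> vecs_in k (lincombs K m b)"
    using index_bound by (auto simp: vecs_in_def vecs_def intro!: lincombsI)
  show "vecs_in k (lincombs K m b)
     \<subseteq> {v. \<exists>\<alpha>. (\<forall>j<k * m. \<alpha> j \<in> K) \<and> v = (\<lambda>i. if i < k then \<Sum>t<m. \<alpha> (m * i + t) * b t else 0)}"
  proof
    fix v assume v: "v \<in> vecs_in k (lincombs K m b)"
    have "\<forall>i<k. \<exists>C. (\<forall>t<m. C t \<in> K) \<and> v i = (\<Sum>t<m. C t * b t)"
      using v unfolding vecs_in_def lincombs_def by blast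
    then obtain C where C: "\<forall>i<k. (\<forall>t<m. C i t \<in> K) \<and> v i = (\<Sum>t<m. C i t * b t)"
      by metis
    define \<alpha> where "\<alpha> j = C (j div m) (j mod m)" for j
    have "\<alpha> j \<in> K" if "j < k * m" for j
    proof -
      have "m > 0" using that by (cases m) auto
      then show ?thesis
        using C that unfolding \<alpha>_def by (simp add: less_mult_imp_div_less mod_less_divisor)
    qed
    moreover have "v = (\<lambda>i. if i < k then \<Sum>t<m. \<alpha> (m * i + t) * b t else 0)"
      using v C unfolding \<alpha>_def vecs_in_def vecs_def by auto
    ultimately show "v \<in> {v. \<exists>\<alpha>. (\<forall>j<k * m. \<alpha> j \<in> K) \<and> v = (\<lambda>i. if i < k then \<Sum>t<m. \<alpha> (m * i + t) * b t else 0)}"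
      by blast
  qed
qed

theorem proposition3p13:
  fixes K :: "'a::{field,finite} set" and q :: nat and u :: 'a
  assumes "\<exists>p e. prime p \<and> e > 0 \<and> q = p ^ e"
    and "is_subfield K" and "card K = q" and "card (UNIV :: 'a set) = q ^ 3"
    and "u \<notin> K"
  shows "is_cutting_system K 8 4
           {v. \<exists>\<alpha>::nat \<Rightarrow> 'a. (\<forall>j<8. \<alpha> j \<in> K) \<and>
                 v = (\<lambda>i. if i < 4 then \<alpha> (2*i) + \<alpha> (2*i+1) * u else 0)}"
proof -
  note K = assms(2)
  let ?W = "lincombs K 2 (\<lambda>t. u ^ t)"
  have indep: "lin_indep_over K 2 (\<lambda>t. u ^ t)" using K assms(5) by (rule lin_indep_over_1_u)
  have two_terms: "(\<Sum>t<2. c t * u ^ t) = c 0 + c 1 * u" for c :: "nat \<Rightarrow> 'a"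
    by (simp add: numeral_2_eq_2)
  have U: "{v. \<exists>\<alpha>::nat \<Rightarrow> 'a. (\<forall>j<8. \<alpha> j \<in> K) \<and>
                 v = (\<lambda>i. if i < 4 then \<alpha> (2*i) + \<alpha> (2*i+1) * u else 0)} = vecs_in 4 ?W"
    using interleaved_coords_eq_vecs_in_lincombs[of 4 2 K "\<lambda>t. u ^ t"]
    unfolding two_terms add_0_right by simp
  have "card {0, 1 :: 'a} \<le> q"
    using K assms(3) card_mono[of K "{0, 1}"] unfolding is_subfield_def by simp
  then have "card (UNIV :: 'a set) < card ?W * card ?W"
    using card_lincombs[OF K _ indep] assms(3,4) by (simp add: power_strict_increasing)
  then have mult: "\<exists>w\<in>?W. w \<noteq> 0 \<and> c * w \<in> ?W" for c
    using lincombs_diff[OF K] by (intro exists_nonzero_multiple_in) auto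
  then obtain w where "w \<in> ?W" "w \<noteq> 0" "0 \<in> ?W" by (metis mult_zero_left)
  then show ?thesis
    unfolding U is_cutting_system_def is_system_def
    using subspace_over_vecs_in_lincombs[OF K] dim_over_vecs_in_lincombs[OF K indep, of 4]
      span_vecs_in span_hyperplane_inter_vecs_in[OF mult]
    by simp
qed

end
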